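(* Let $\varphi$ be a formula in variables $x_1,\dots,x_n$ and let $p$ be a variable distinct from $x_1,\dots,x_n$. Define the single $p$-negation transform $\varphi^{p}$ of $\varphi$ to be the formula obtained by replacing each occurrence of each variable $x_i$ by $(x_i\Rightarrow p)$ and each occurrence of the constant $\mathbf{0}$ by $p$, leaving $\vee,\wedge,\Rightarrow$ and $\mathbf{1}$ unchanged. If $\varphi$ is a subset tautology, then $\varphi^{p}$ is a partition tautology. In particular, the weak law of excluded middle $(x\Rightarrow p)\vee((x\Rightarrow p)\Rightarrow p)$ is a partition tautology.
   Context: Formulas are built from variables and the constants $\mathbf{0},\mathbf{1}$ using the binary connectives $\vee,\wedge,\Rightarrow$. A formula is a subset tautology if, for every nonempty set $U$ and every assignment of subsets of $U$ to the variables, it evaluates to $U$ when $\vee,\wedge$ are interpreted as $\cup,\cap$, $S\Rightarrow T$ as $(U\setminus S)\cup T$, $\mathbf{0}$ as $\emptyset$ and $\mathbf{1}$ as $U$. A partition on a set $U$ is a set of non-empty, pairwise disjoint subsets of $U$ (called blocks) whose union is $U$. The discrete partition is $\mathbf{1}=\{\{u\}:u\in U\}$ and the indiscrete partition is $\mathbf{0}=\{U\}$. The join $\pi\vee\sigma$ is the partition whose blocks are the non-empty intersections $B\cap C$, $B\in\pi$, $C\in\sigma$. The meet $\pi\wedge\sigma$ is the partition whose blocks are the equivalence classes of the equivalence relation on $U$ generated by: $u\sim u'$ if $u,u'$ lie in a common block of $\pi$ or in a common block of $\sigma$. The partition implication $\sigma\Rightarrow\pi$ is the partition obtained from $\pi$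 by replacing every block $B\in\pi$ that is contained in some block of $\sigma$ by the singletons $\{u\}$, $u\in B$, and leaving every block of $\pi$ not contained in any block of $\sigma$ unchanged. A formula is a partition tautology if, for every set $U$ with $|U|\ge 2$ and every assignment of partitions on $U$ to the variables, it evaluates to $\mathbf{1}$ when $\vee,\wedge,\Rightarrow,\mathbf{0},\mathbf{1}$ are interpreted as the partition join, meet, implication, indiscrete and discrete partitions. *)

theory Defs
  imports Main
begin

datatype form = Var nat | Zero | One | Join form form | Meet form form | Imp form form

fun vars :: "form \<Rightarrow> nat set" where
  "vars (Var i) = {i}"
| "vars Zero = {}"
| "vars One = {}"
| "vars (Join a b) = vars a \<union> vars b"
| "vars (Meet a b) = vars a \<union> vars b"
| "vars (Imp a b) = vars a \<union> vars b"

fun pneg :: "nat \<Rightarrow> form \<Rightarrow> form" where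
  "pneg p (Var i) = Imp (Var i) (Var p)"
| "pneg p Zero = Var p"
| "pneg p One = One"
| "pneg p (Join a b) = Join (pneg p a) (pneg p b)"
| "pneg p (Meet a b) = Meet (pneg p a) (pneg p b)"
| "pneg p (Imp a b) = Imp (pneg p a) (pneg p b)"

fun sval :: "'a set \<Rightarrow> (nat \<Rightarrow> 'a set) \<Rightarrow> form \<Rightarrow> 'a set" where
  "sval U v (Var i) = v i"
| "sval U v Zero = {}"
| "sval U v One = U"
| "sval U v (Join a b) = sval U v a \<union> sval U v b"
| "sval U v (Meet a b) = sval U v a \<inter> sval U v b"
| "sval U v (Imp a b) = (U - sval U v a) \<union> sval U v b"

definition subset_taut :: "'a itself \<Rightarrow> form \<Rightarrow> bool" where
  "subset_taut (T :: 'a itself) \<phi> \<longleftrightarrow>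
     (\<forall>(U :: 'a set) v. U \<noteq> {} \<longrightarrow> (\<forall>i. v i \<subseteq> U) \<longrightarrow> sval U v \<phi> = U)"

definition is_partition :: "'a set \<Rightarrow> 'a set set \<Rightarrow> bool" where
  "is_partition U \<pi> \<longleftrightarrow> (\<forall>B\<in>\<pi>. B \<noteq> {}) \<and>
     (\<forall>B\<in>\<pi>. \<forall>C\<in>\<pi>. B \<noteq> C \<longrightarrow> B \<inter> C = {}) \<and> \<Union>\<pi> = U"

definition discrete :: "'a set \<Rightarrow> 'a set set" where
  "discrete U = {{u} | u. u \<in> U}"

definition indiscrete :: "'a set \<Rightarrow> 'a set set" where
  "indiscrete U = {U}"

definition pjoin :: "'a set set \<Rightarrow> 'a set set \<Rightarrow> 'a set set" where
  "pjoin \<pi> \<sigma> = {B \<inter> C | B C. B \<in> \<pi> \<and> C \<in> \<sigma> \<and> B \<inter> C \<noteq> {}}"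

definition pmeet :: "'a set \<Rightarrow> 'a set set \<Rightarrow> 'a set set \<Rightarrow> 'a set set" where
  "pmeet U \<pi> \<sigma> =
     U // (({(u, u'). \<exists>B \<in> \<pi> \<union> \<sigma>. u \<in> B \<and> u' \<in> B})\<^sup>*)"

definition pimp :: "'a set set \<Rightarrow> 'a set set \<Rightarrow> 'a set set" where
  "pimp \<sigma> \<pi> =
     {B \<in> \<pi>. \<not> (\<exists>C \<in> \<sigma>. B \<subseteq> C)} \<union>
     {{u} | u. \<exists>B \<in> \<pi>. u \<in> B \<and> (\<exists>C \<in> \<sigma>. B \<subseteq> C)}"

fun pval :: "'a set \<Rightarrow> (nat \<Rightarrow> 'a set set) \<Rightarrow> form \<Rightarrow> 'a set set" where
  "pval U v (Var i) = v i"
| "pval U v Zero = indiscrete U"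
| "pval U v One = discrete U"
| "pval U v (Join a b) = pjoin (pval U v a) (pval U v b)"
| "pval U v (Meet a b) = pmeet U (pval U v a) (pval U v b)"
| "pval U v (Imp a b) = pimp (pval U v a) (pval U v b)"

definition partition_taut :: "'a itself \<Rightarrow> form \<Rightarrow> bool" where
  "partition_taut (T :: 'a itself) \<phi> \<longleftrightarrow>
     (\<forall>(U :: 'a set) v. (\<exists>u\<in>U. \<exists>u'\<in>U. u \<noteq> u') \<longrightarrow> (\<forall>i. is_partition U (v i)) \<longrightarrow>
        pval U v \<phi> = discrete U)"

end

theory Submission
  imports Defs
begin

text \<open>Fix the value \<pi> of p. The formula x \<Rightarrow> p evaluates to the refinement of \<pi> that splits into
singletons exactly the blocks of \<pi> lying inside a block of x, and p itself is the refinement that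
splits nothing. Splitting the blocks that satisfy a predicate f, as f ranges over predicates on
blocks, is closed under join, meet and implication, which act on f as \<or>, \<and> and \<longrightarrow> (up to singleton
blocks, where splitting changes nothing). So the transform of \<phi> evaluates to the refinement by the
classical value of \<phi> at a block B, reading x_i as "B lies inside a block of x_i". A subset
tautology is a classical tautology (evaluate it on constant subsets), so every block is split and
the result is the discrete partition.\<close>

definition block_rel :: "'a set set \<Rightarrow> ('a \<times> 'a) set" where
  "block_rel \<pi> = {(u, u'). \<exists>B\<in>\<pi>. u \<in> B \<and> u' \<in> B}"

lemma partition_block_unique:
  "is_partition U \<pi> \<Longrightarrow> B \<in> \<pi> \<Longrightarrow> C \<in> \<pi> \<Longrightarrow> u \<in> B \<Longrightarrow> u \<in> C \<Longrightarrow> B = C"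
  unfolding is_partition_def by blast

lemma partition_block_nonempty: "is_partition U \<pi> \<Longrightarrow> B \<in> \<pi> \<Longrightarrow> B \<noteq> {}"
  unfolding is_partition_def by blast

lemma partition_Union: "is_partition U \<pi> \<Longrightarrow> \<Union>\<pi> = U"
  unfolding is_partition_def by blast

lemma quotient_block_rel:
  assumes "is_partition U \<pi>"
  shows "U // (block_rel \<pi>)\<^sup>* = \<pi>"
proof -
  have "trans (block_rel \<pi>)"
    using partition_block_unique[OF assms] unfolding block_rel_def trans_def by blast
  then have "(block_rel \<pi>)\<^sup>* = (block_rel \<pi>)\<^sup>="
    by (simp add: rtrancl_trancl_reflcl)
  moreover have "(block_rel \<pi>)\<^sup>= `` {u} = B" if "B \<in> \<pi>" "u \<in> B" for u B
    using that partition_block_unique[OF assms] unfolding block_rel_def by blast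
  ultimately have block_class: "(block_rel \<pi>)\<^sup>* `` {u} = B" if "B \<in> \<pi>" "u \<in> B" for u B
    using that by simp
  show ?thesis
  proof
    show "U // (block_rel \<pi>)\<^sup>* \<subseteq> \<pi>"
    proof
      fix X assume "X \<in> U // (block_rel \<pi>)\<^sup>*"
      then obtain u where "u \<in> U" "X = (block_rel \<pi>)\<^sup>* `` {u}" by (rule quotientE)
      moreover obtain B where "B \<in> \<pi>" "u \<in> B"
        using partition_Union[OF assms] \<open>u \<in> U\<close> by blast
      ultimately show "X \<in> \<pi>" using block_class by simp
    qed
    show "\<pi> \<subseteq> U // (block_rel \<pi>)\<^sup>*"
    proof
      fix B assume "B \<in> \<pi>"
      then obtain u where "u \<in> B" "u \<in> U"
        using partition_block_nonempty[OF assms] partition_Union[OF assms] by blast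
      then show "B \<in> U // (block_rel \<pi>)\<^sup>*"
        using quotientI[of u U] block_class[OF \<open>B \<in> \<pi>\<close>] by metis
    qed
  qed
qed

lemma partition_eq_block_rel:
  assumes "is_partition U \<pi>" "is_partition U \<sigma>" "block_rel \<pi> = block_rel \<sigma>"
  shows "\<pi> = \<sigma>"
  by (metis assms quotient_block_rel)

lemma block_rel_Un: "block_rel (\<pi> \<union> \<sigma>) = block_rel \<pi> \<union> block_rel \<sigma>"
  unfolding block_rel_def by blast

lemma pmeet_eq_quotient: "pmeet U \<pi> \<sigma> = U // (block_rel (\<pi> \<union> \<sigma>))\<^sup>*"
  unfolding pmeet_def block_rel_def ..

lemma partition_pjoin:
  assumes \<pi>: "is_partition U \<pi>" and \<sigma>: "is_partition U \<sigma>"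
  shows "is_partition U (pjoin \<pi> \<sigma>)"
  unfolding is_partition_def
proof (intro conjI ballI impI)
  fix X assume "X \<in> pjoin \<pi> \<sigma>"
  then show "X \<noteq> {}" unfolding pjoin_def by blast
next
  fix X Y assume "X \<in> pjoin \<pi> \<sigma>" "Y \<in> pjoin \<pi> \<sigma>" "X \<noteq> Y"
  then obtain B C B' C' where "B \<in> \<pi>" "C \<in> \<sigma>" "B' \<in> \<pi>" "C' \<in> \<sigma>"
    and "X = B \<inter> C" "Y = B' \<inter> C'" "X \<noteq> Y"
    unfolding pjoin_def by blast
  then show "X \<inter> Y = {}"
    using partition_block_unique[OF \<pi>, of B B'] partition_block_unique[OF \<sigma>, of C C'] by blast
next
  show "\<Union>(pjoin \<pi> \<sigma>) = U"
    using partition_Union[OF \<pi>] partition_Union[OF \<sigma>] unfolding pjoin_def by blast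
qed

lemma block_rel_pjoin: "block_rel (pjoin \<pi> \<sigma>) = block_rel \<pi> \<inter> block_rel \<sigma>"
  unfolding pjoin_def block_rel_def by blast

definition refine :: "'a set set \<Rightarrow> ('a set \<Rightarrow> bool) \<Rightarrow> 'a set set" where
  "refine \<pi> f = {B \<in> \<pi>. \<not> f B} \<union> {{u} | u. \<exists>B\<in>\<pi>. u \<in> B \<and> f B}"

lemma refine_refine: "refine (refine \<pi> f) g = refine \<pi> (\<lambda>B. f B \<or> g B)"
  unfolding refine_def by blast

lemma refine_cong:
  "(\<And>B. B \<in> \<pi> \<Longrightarrow> \<not> is_singleton B \<Longrightarrow> f B = g B) \<Longrightarrow> refine \<pi> f = refine \<pi> g"
  unfolding refine_def is_singleton_def by blast

lemma refine_False: "refine \<pi> (\<lambda>B. False) = \<pi>"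
  unfolding refine_def by auto

lemma refine_True:
  assumes "is_partition U \<pi>"
  shows "refine \<pi> (\<lambda>B. True) = discrete U"
  using partition_Union[OF assms] unfolding refine_def discrete_def by blast

lemma Union_refine: "\<Union>(refine \<pi> f) = \<Union>\<pi>"
  unfolding refine_def by blast

lemma partition_refine:
  assumes \<pi>: "is_partition U \<pi>"
  shows "is_partition U (refine \<pi> f)"
  unfolding is_partition_def
proof (intro conjI ballI impI)
  fix X assume "X \<in> refine \<pi> f"
  then show "X \<noteq> {}"
    using partition_block_nonempty[OF \<pi>] unfolding refine_def by blast
next
  fix X Y assume X: "X \<in> refine \<pi> f" and Y: "Y \<in> refine \<pi> f" and "X \<noteq> Y"
  show "X \<inter> Y = {}"
  proof (rule ccontr)
    assume "X \<inter> Y \<noteq> {}"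
    then obtain w where "w \<in> X" "w \<in> Y" by blast
    with X Y \<open>X \<noteq> Y\<close> show False
      using partition_block_unique[OF \<pi>] unfolding refine_def by blast
  qed
next
  show "\<Union>(refine \<pi> f) = U"
    using partition_Union[OF \<pi>] by (simp add: Union_refine)
qed

lemma block_rel_refine:
  assumes "is_partition U \<pi>"
  shows "block_rel (refine \<pi> f) =
    {(u, u'). u = u' \<and> u \<in> U \<or> (\<exists>B\<in>\<pi>. u \<in> B \<and> u' \<in> B \<and> \<not> f B)}"
  using partition_Union[OF assms] unfolding block_rel_def refine_def by blast

lemma pjoin_refine:
  assumes "is_partition U \<pi>"
  shows "pjoin (refine \<pi> f) (refine \<pi> g) = refine \<pi> (\<lambda>B. f B \<or> g B)"
proof (rule partition_eq_block_rel)
  show "block_rel (pjoin (refine \<pi> f) (refine \<pi> g)) = block_rel (refine \<pi> (\<lambda>B. f B \<or> g B))"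
    unfolding block_rel_pjoin block_rel_refine[OF assms]
    using partition_block_unique[OF assms] by blast
qed (use assms partition_refine partition_pjoin in blast)+

lemma pmeet_refine:
  assumes "is_partition U \<pi>"
  shows "pmeet U (refine \<pi> f) (refine \<pi> g) = refine \<pi> (\<lambda>B. f B \<and> g B)"
proof -
  have "block_rel (refine \<pi> f \<union> refine \<pi> g) = block_rel (refine \<pi> f) \<union> block_rel (refine \<pi> g)"
    by (rule block_rel_Un)
  also have "\<dots> = block_rel (refine \<pi> (\<lambda>B. f B \<and> g B))"
    unfolding block_rel_refine[OF assms] by blast
  finally show ?thesis
    unfolding pmeet_eq_quotient using quotient_block_rel[OF partition_refine[OF assms]] by simp
qed

lemma pimp_eq_refine: "pimp \<sigma> \<pi> = refine \<pi> (\<lambda>B. \<exists>C\<in>\<sigma>. B \<subseteq> C)"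
  unfolding pimp_def refine_def ..

lemma block_subset_refine_iff:
  assumes "is_partition U \<pi>" "B \<in> \<pi>"
  shows "(\<exists>C\<in>refine \<pi> f. B \<subseteq> C) \<longleftrightarrow> is_singleton B \<or> \<not> f B"
proof
  assume "\<exists>C\<in>refine \<pi> f. B \<subseteq> C"
  then obtain C where C: "C \<in> refine \<pi> f" "B \<subseteq> C" by blast
  have "B \<noteq> {}" using partition_block_nonempty[OF assms] .
  then show "is_singleton B \<or> \<not> f B"
    using C partition_block_unique[OF assms(1) assms(2)]
    unfolding refine_def is_singleton_def by blast
next
  assume "is_singleton B \<or> \<not> f B"
  then show "\<exists>C\<in>refine \<pi> f. B \<subseteq> C"
    using assms(2) unfolding refine_def is_singleton_def by blast
qed

lemma pimp_refine:
  assumes "is_partition U \<pi>"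
  shows "pimp (refine \<pi> f) (refine \<pi> g) = refine \<pi> (\<lambda>B. f B \<longrightarrow> g B)"
proof -
  have "pimp (refine \<pi> f) (refine \<pi> g) = refine (refine \<pi> g) (\<lambda>B. is_singleton B \<or> \<not> f B)"
    unfolding pimp_eq_refine
  proof (rule refine_cong)
    fix B assume "B \<in> refine \<pi> g" "\<not> is_singleton B"
    then have "B \<in> \<pi>" unfolding refine_def is_singleton_def by blast
    then show "(\<exists>C\<in>refine \<pi> f. B \<subseteq> C) = (is_singleton B \<or> \<not> f B)"
      by (rule block_subset_refine_iff[OF assms])
  qed
  also have "\<dots> = refine \<pi> (\<lambda>B. f B \<longrightarrow> g B)"
    unfolding refine_refine by (rule refine_cong) blast
  finally show ?thesis .
qed

fun bval :: "(nat \<Rightarrow> bool) \<Rightarrow> form \<Rightarrow> bool" where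
  "bval b (Var i) = b i"
| "bval b Zero = False"
| "bval b One = True"
| "bval b (Join \<phi> \<psi>) = (bval b \<phi> \<or> bval b \<psi>)"
| "bval b (Meet \<phi> \<psi>) = (bval b \<phi> \<and> bval b \<psi>)"
| "bval b (Imp \<phi> \<psi>) = (bval b \<phi> \<longrightarrow> bval b \<psi>)"

lemma sval_const_sets: "sval UNIV (\<lambda>i. {z. b i}) \<phi> = {z. bval b \<phi>}"
  by (induction \<phi>) auto

lemma subset_taut_bval:
  assumes "subset_taut TYPE('a) \<phi>"
  shows "bval b \<phi>"
proof -
  have "sval (UNIV :: 'a set) (\<lambda>i. {z. b i}) \<phi> = UNIV"
    using assms unfolding subset_taut_def by blast
  then show ?thesis unfolding sval_const_sets by blast
qed

lemma pval_pneg: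
  assumes "\<And>i. is_partition U (v i)"
  shows "pval U v (pneg p \<phi>) = refine (v p) (\<lambda>B. bval (\<lambda>i. \<exists>C\<in>v i. B \<subseteq> C) \<phi>)"
proof (induction \<phi>)
  case (Var i)
  show ?case by (simp add: pimp_eq_refine)
qed (use assms[of p] in \<open>simp_all add: refine_False refine_True pjoin_refine pmeet_refine pimp_refine\<close>)

lemma partition_taut_pneg:
  assumes "\<And>b. bval b \<phi>"
  shows "partition_taut TYPE('a) (pneg p \<phi>)"
  unfolding partition_taut_def
proof (intro allI impI)
  fix U :: "'a set" and v :: "nat \<Rightarrow> 'a set set"
  assume "\<exists>u\<in>U. \<exists>u'\<in>U. u \<noteq> u'" and partitions: "\<forall>i. is_partition U (v i)"
  have "pval U v (pneg p \<phi>) = refine (v p) (\<lambda>B. True)"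
    using pval_pneg[of U v p \<phi>] partitions assms by simp
  with partitions show "pval U v (pneg p \<phi>) = discrete U"
    by (simp add: refine_True)
qed

theorem mainTheorem9:
  fixes \<phi> :: form and p x :: nat
  shows "(subset_taut TYPE('a) \<phi> \<and> p \<notin> vars \<phi> \<longrightarrow> partition_taut TYPE('a) (pneg p \<phi>))
       \<and> (x \<noteq> p \<longrightarrow>
            partition_taut TYPE('a) (Join (Imp (Var x) (Var p)) (Imp (Imp (Var x) (Var p)) (Var p))))"
proof (intro conjI impI)
  assume "subset_taut TYPE('a) \<phi> \<and> p \<notin> vars \<phi>"
  then show "partition_taut TYPE('a) (pneg p \<phi>)"
    by (blast intro: partition_taut_pneg subset_taut_bval)
next
  have "partition_taut TYPE('a) (pneg p (Join (Var x) (Imp (Var x) Zero)))"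
    by (rule partition_taut_pneg) simp
  then show "partition_taut TYPE('a) (Join (Imp (Var x) (Var p)) (Imp (Imp (Var x) (Var p)) (Var p)))"
    by simp
qed

end
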